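(* Let $(X,d)$ be a nonempty compact and rectifiably path-connected metric space and let $F:(X,d)\rightarrow (K(X),H)$ be a set-valued pointwise contraction. Then $F:(X,d_r)\rightarrow(K(X),H_r)$ is shrinking, i.e., $H_r(F(x),F(y))<d_r(x,y)$ for all $x,y\in X$ with $x\neq y$.
   Context: The length of a continuous path $p:[0,1]\to X$ is $l(p)=\sup\sum_{i=1}^n d(p(t_{i-1}),p(t_i))$ over finite partitions $0=t_0<\cdots<t_n=1$; $X$ is rectifiably path-connected if every two points are joined by a continuous path of finite length. $d_r(x,y)=\inf\{l(p):p$ a rectifiable path from $x$ to $y\}$. $K(X)$ is the set of nonempty compact subsets of $X$; $H$ and $H_r$ are the Hausdorff distances associated with $d$ and $d_r$ respectively, where for a metric $\rho$, $H_\rho(A,B)=\max\{\sup_{a\in A}\inf_{b\in B}\rho(a,b),\sup_{b\in B}\inf_{a\in A}\rho(a,b)\}$. $F$ is a set-valued pointwise contraction if for every $x\in X$ there exist $\beta_x\in[0,1)$ and an open neighborhood $N(x)$ with $H(F(x),F(y))\le\beta_x d(x,y)$ for all $y\in N(x)$. *)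

theory Defs
  imports "HOL-Analysis.Analysis"
begin

definition path_len :: "(real \<Rightarrow> 'a::metric_space) \<Rightarrow> ereal" where
  "path_len p = (SUP nt \<in> {(n, t). t 0 = (0::real) \<and> t n = 1 \<and> (\<forall>i<n. t i < t (Suc i))}.
      ereal (\<Sum>i<fst nt. dist (p (snd nt i)) (p (snd nt (Suc i)))))"

definition rect_path :: "'a::metric_space set \<Rightarrow> (real \<Rightarrow> 'a) \<Rightarrow> 'a \<Rightarrow> 'a \<Rightarrow> bool" where
  "rect_path X p x y \<longleftrightarrow> continuous_on {0..1} p \<and> p ` {0..1} \<subseteq> X \<and> p 0 = x \<and> p 1 = y
      \<and> path_len p < \<infinity>"

definition rect_path_connected :: "'a::metric_space set \<Rightarrow> bool" where
  "rect_path_connected X \<longleftrightarrow> (\<forall>x\<in>X. \<forall>y\<in>X. \<exists>p. rect_path X p x y)"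

definition d_r :: "'a::metric_space set \<Rightarrow> 'a \<Rightarrow> 'a \<Rightarrow> real" where
  "d_r X x y = Inf {real_of_ereal (path_len p) | p. rect_path X p x y}"

definition hdist :: "('a \<Rightarrow> 'a \<Rightarrow> real) \<Rightarrow> 'a set \<Rightarrow> 'a set \<Rightarrow> ereal" where
  "hdist \<rho> A B = max (SUP a\<in>A. ereal (INF b\<in>B. \<rho> a b)) (SUP b\<in>B. ereal (INF a\<in>A. \<rho> a b))"

definition maps_into_KX :: "'a::metric_space set \<Rightarrow> ('a \<Rightarrow> 'a set) \<Rightarrow> bool" where
  "maps_into_KX X F \<longleftrightarrow> (\<forall>x\<in>X. F x \<noteq> {} \<and> compact (F x) \<and> F x \<subseteq> X)"

definition setvalued_pointwise_contraction :: "'a::metric_space set \<Rightarrow> ('a \<Rightarrow> 'a set) \<Rightarrow> bool" where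
  "setvalued_pointwise_contraction X F \<longleftrightarrow>
     (\<forall>x\<in>X. \<exists>\<beta> N. 0 \<le> \<beta> \<and> \<beta> < 1 \<and> openin (top_of_set X) N \<and> x \<in> N \<and>
        (\<forall>y\<in>N. hdist dist (F x) (F y) \<le> ereal (\<beta> * dist x y)))"

end

theory Submission
  imports Defs
begin

(* Let D = d_r(x, y) > 0. By compactness of X, limits of almost shortest chains give a
   D-Lipschitz path q from x to y. Along q the sets F(q t) move at Hausdorff speed at most D, and
   near every parameter u even at speed \<beta> D for some \<beta> < 1 depending on u; by Baire's theorem
   there is a subinterval on which \<beta> < 1 and the radius of validity are uniform. Following q,
   every a \<in> F(x) is then joined to F(y) by \<epsilon>-chains of length at most G + \<epsilon> with a fixed
   G < D: speed D outside the subinterval (a supremum argument), speed \<beta> D inside it.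
   Compactness turns these chains into a G-Lipschitz path, so d_r(a, F(y)) \<le> G, and
   symmetrically from F(y) back to F(x); hence H_r(F(x), F(y)) < D. *)

section \<open>Path length and the length metric\<close>

lemma partition_mono:
  fixes t :: "nat \<Rightarrow> real"
  assumes "\<forall>i<n. t i < t (Suc i)" "i \<le> j" "j \<le> n"
  shows "t i \<le> t j"
  using assms(2,3)
proof (induction j)
  case (Suc j)
  show ?case
  proof (cases "i = Suc j")
    case False
    then have "t i \<le> t j" using Suc by simp
    also have "t j < t (Suc j)" using assms(1) Suc by simp
    finally show ?thesis by simp
  qed simp
qed simp

lemma polygonal_le_path_len:
  assumes "t 0 = 0" "t n = 1" "\<forall>i<n. t i < t (Suc i)"
  shows "ereal (\<Sum>i<n. dist (p (t i)) (p (t (Suc i)))) \<le> path_len p"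
proof -
  have "(n, t) \<in> {(n, t). t 0 = (0::real) \<and> t n = 1 \<and> (\<forall>i<n. t i < t (Suc i))}"
    using assms by simp
  from SUP_upper[OF this, of "\<lambda>nt. ereal (\<Sum>i<fst nt. dist (p (snd nt i)) (p (snd nt (Suc i))))"]
  show ?thesis unfolding path_len_def by simp
qed

lemma path_len_ge_dist: "ereal (dist (p 0) (p 1)) \<le> path_len p"
  using polygonal_le_path_len[of real 1 p] by simp

lemma path_len_nonneg: "0 \<le> path_len p"
  by (rule order_trans[OF _ path_len_ge_dist]) simp

lemma path_len_le_lipschitz:
  fixes g :: "real \<Rightarrow> 'a::metric_space"
  assumes "M-lipschitz_on {0..1} g"
  shows "path_len g \<le> ereal M"
  unfolding path_len_def
proof (rule SUP_least, clarsimp)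
  fix n and t :: "nat \<Rightarrow> real"
  assume t0: "t 0 = 0" and tn: "t n = 1" and inc: "\<forall>i<n. t i < t (Suc i)"
  have t01: "t i \<in> {0..1}" if "i \<le> n" for i
    using partition_mono[OF inc, of 0 i] partition_mono[OF inc, of i n] that t0 tn by auto
  have "(\<Sum>i<n. dist (g (t i)) (g (t (Suc i)))) \<le> (\<Sum>i<n. M * (t (Suc i) - t i))"
  proof (rule sum_mono)
    fix i assume i: "i \<in> {..<n}"
    then have "dist (g (t i)) (g (t (Suc i))) \<le> M * dist (t i) (t (Suc i))"
      using t01 by (intro lipschitz_onD[OF assms]) auto
    moreover have "dist (t i) (t (Suc i)) = t (Suc i) - t i"
      using inc i by (simp add: dist_real_def abs_if)
    ultimately show "dist (g (t i)) (g (t (Suc i))) \<le> M * (t (Suc i) - t i)" by simp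
  qed
  also have "\<dots> = M * (t n - t 0)"
    by (simp add: sum_distrib_left[symmetric] sum_lessThan_telescope)
  finally show "(\<Sum>i<n. dist (g (t i)) (g (t (Suc i)))) \<le> M"
    using t0 tn by simp
qed

lemma rect_path_of_lipschitz:
  fixes g :: "real \<Rightarrow> 'a::metric_space"
  assumes "M-lipschitz_on {0..1} g" "g ` {0..1} \<subseteq> X"
  shows "rect_path X g (g 0) (g 1)"
  using lipschitz_on_continuous_on[OF assms(1)] path_len_le_lipschitz[OF assms(1)] assms(2)
  unfolding rect_path_def by (auto intro: le_less_trans)

lemma rect_path_len_finite: "rect_path X p a b \<Longrightarrow> ereal (real_of_ereal (path_len p)) = path_len p"
  using path_len_nonneg[of p] unfolding rect_path_def by (cases "path_len p") auto

lemma d_r_le_path_len: "rect_path X p a b \<Longrightarrow> d_r X a b \<le> real_of_ereal (path_len p)"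
  unfolding d_r_def
  by (intro cInf_lower bdd_belowI[of _ 0]) (auto intro: real_of_ereal_pos path_len_nonneg)

lemma d_r_le_lipschitz:
  fixes g :: "real \<Rightarrow> 'a::metric_space"
  assumes "M-lipschitz_on {0..1} g" "g ` {0..1} \<subseteq> X"
  shows "d_r X (g 0) (g 1) \<le> M"
proof -
  have "real_of_ereal (path_len g) \<le> M"
    using path_len_le_lipschitz[OF assms(1)] path_len_nonneg[of g] lipschitz_on_nonneg[OF assms(1)]
    by (cases "path_len g") auto
  then show ?thesis
    using d_r_le_path_len[OF rect_path_of_lipschitz[OF assms]] by linarith
qed

lemma lipschitz_on_reverse:
  fixes g :: "real \<Rightarrow> 'a::metric_space"
  assumes "M-lipschitz_on {0..1} g"
  shows "M-lipschitz_on {0..1} (\<lambda>t. g (1 - t))"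
proof (rule lipschitz_onI)
  fix s t :: real assume "s \<in> {0..1}" "t \<in> {0..1}"
  then have "dist (g (1 - s)) (g (1 - t)) \<le> M * dist (1 - s) (1 - t)"
    by (intro lipschitz_onD[OF assms]) auto
  then show "dist (g (1 - s)) (g (1 - t)) \<le> M * dist s t"
    by (simp add: dist_real_def abs_minus_commute)
qed (rule lipschitz_on_nonneg[OF assms])

lemma d_r_le_lipschitz_reverse:
  fixes g :: "real \<Rightarrow> 'a::metric_space"
  assumes "M-lipschitz_on {0..1} g" "g ` {0..1} \<subseteq> X"
  shows "d_r X (g 1) (g 0) \<le> M"
proof -
  have "(\<lambda>t. g (1 - t)) ` {0..1} \<subseteq> X" using assms(2) by auto
  from d_r_le_lipschitz[OF lipschitz_on_reverse[OF assms(1)] this] show ?thesis by simp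
qed

lemma dist_le_d_r:
  assumes "rect_path_connected X" "a \<in> X" "b \<in> X"
  shows "dist a b \<le> d_r X a b"
  unfolding d_r_def
proof (rule cInf_greatest)
  show "{real_of_ereal (path_len p) |p. rect_path X p a b} \<noteq> {}"
    using assms unfolding rect_path_connected_def by auto
next
  fix l assume "l \<in> {real_of_ereal (path_len p) |p. rect_path X p a b}"
  then obtain p where p: "rect_path X p a b" and l: "l = real_of_ereal (path_len p)" by blast
  have "ereal (dist (p 0) (p 1)) \<le> ereal l"
    using path_len_ge_dist[of p] rect_path_len_finite[OF p] l by simp
  then show "dist a b \<le> l" using p unfolding rect_path_def by simp
qed

lemma exists_rect_path_shorter:
  assumes "rect_path_connected X" "a \<in> X" "b \<in> X" "0 < e"
  shows "\<exists>p. rect_path X p a b \<and> real_of_ereal (path_len p) < d_r X a b + e"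
proof -
  have "{real_of_ereal (path_len p) |p. rect_path X p a b} \<noteq> {}"
    using assms unfolding rect_path_connected_def by auto
  from cInf_lessD[OF this, of "d_r X a b + e"] show ?thesis
    using assms(4) unfolding d_r_def by auto
qed

section \<open>Hausdorff excess\<close>

definition excess_le :: "'a::metric_space set \<Rightarrow> 'a set \<Rightarrow> real \<Rightarrow> bool" where
  "excess_le A B c \<longleftrightarrow> (\<forall>a\<in>A. infdist a B \<le> c)"

lemma excess_le_mono: "excess_le A B c \<Longrightarrow> c \<le> c' \<Longrightarrow> excess_le A B c'"
  unfolding excess_le_def by force

lemma infdist_attained_compact:
  fixes B :: "'a::metric_space set"
  assumes "compact B" "B \<noteq> {}"
  obtains b where "b \<in> B" "infdist a B = dist a b"
proof -
  have "continuous_on B (dist a)" by (intro continuous_intros)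
  then obtain b where b: "b \<in> B" "\<And>y. y \<in> B \<Longrightarrow> dist a b \<le> dist a y"
    using continuous_attains_inf[OF assms] by blast
  have "infdist a B = dist a b"
  proof (rule antisym)
    show "infdist a B \<le> dist a b" by (rule infdist_le[OF b(1)])
    show "dist a b \<le> infdist a B"
      using assms(2) b unfolding infdist_def by (auto intro: cINF_greatest)
  qed
  with b that show ?thesis by blast
qed

lemma excess_le_trans:
  assumes "excess_le A B c" "excess_le B C d" "compact B" "B \<noteq> {}"
  shows "excess_le A C (c + d)"
  unfolding excess_le_def
proof
  fix a assume "a \<in> A"
  obtain b where b: "b \<in> B" "infdist a B = dist a b"
    using infdist_attained_compact[OF assms(3,4)] by blast
  have "infdist a C \<le> infdist b C + dist a b" by (rule infdist_triangle)
  also have "\<dots> \<le> d + c" using assms(1,2) \<open>a \<in> A\<close> b unfolding excess_le_def by (metis add_mono)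
  finally show "infdist a C \<le> c + d" by simp
qed

lemma excess_le_of_hdist:
  fixes A B :: "'a::metric_space set"
  assumes "hdist dist A B \<le> ereal c" "A \<noteq> {}" "B \<noteq> {}"
  shows "excess_le A B c" "excess_le B A c"
proof -
  show "excess_le A B c" unfolding excess_le_def
  proof
    fix a assume "a \<in> A"
    then have "ereal (INF b\<in>B. dist a b) \<le> hdist dist A B"
      unfolding hdist_def by (intro max.coboundedI1 SUP_upper)
    then have "ereal (INF b\<in>B. dist a b) \<le> ereal c" using assms(1) by (rule order_trans)
    then show "infdist a B \<le> c" using assms(3) by (simp add: infdist_def)
  qed
  show "excess_le B A c" unfolding excess_le_def
  proof
    fix b assume "b \<in> B"
    then have "ereal (INF a\<in>A. dist a b) \<le> hdist dist A B"
      unfolding hdist_def by (intro max.coboundedI2 SUP_upper)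
    then have "ereal (INF a\<in>A. dist a b) \<le> ereal c" using assms(1) by (rule order_trans)
    then show "infdist b A \<le> c" using assms(2) by (simp add: infdist_def dist_commute)
  qed
qed

lemma hdist_le:
  assumes nonneg: "\<And>a b. a \<in> A \<Longrightarrow> b \<in> B \<Longrightarrow> 0 \<le> \<rho> a b"
    and AB: "\<And>a. a \<in> A \<Longrightarrow> \<exists>b\<in>B. \<rho> a b \<le> c"
    and BA: "\<And>b. b \<in> B \<Longrightarrow> \<exists>a\<in>A. \<rho> a b \<le> c"
  shows "hdist \<rho> A B \<le> ereal c"
  unfolding hdist_def
proof (intro max.boundedI SUP_least)
  fix a assume a: "a \<in> A"
  then obtain b where "b \<in> B" "\<rho> a b \<le> c" using AB by blast
  then have "(INF b\<in>B. \<rho> a b) \<le> c"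
    using nonneg a by (meson bdd_belowI2 cINF_lower order_trans)
  then show "ereal (INF b\<in>B. \<rho> a b) \<le> ereal c" by simp
next
  fix b assume b: "b \<in> B"
  then obtain a where "a \<in> A" "\<rho> a b \<le> c" using BA by blast
  then have "(INF a\<in>A. \<rho> a b) \<le> c"
    using nonneg b by (meson bdd_belowI2 cINF_lower order_trans)
  then show "ereal (INF a\<in>A. \<rho> a b) \<le> ereal c" by simp
qed

section \<open>Chains of small steps\<close>

definition chain_length :: "(nat \<Rightarrow> 'a::metric_space) \<Rightarrow> nat \<Rightarrow> real" where
  "chain_length z n = (\<Sum>i<n. dist (z i) (z (Suc i)))"

definition chain_reaches :: "'a::metric_space set \<Rightarrow> real \<Rightarrow> 'a \<Rightarrow> 'a set \<Rightarrow> real \<Rightarrow> bool" where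
  "chain_reaches X e a K l \<longleftrightarrow> (\<exists>n z. z 0 = a \<and> z n \<in> K \<and> (\<forall>i\<le>n. z i \<in> X) \<and>
      (\<forall>i<n. dist (z i) (z (Suc i)) \<le> e) \<and> chain_length z n \<le> l)"

lemma chain_length_mono: "i \<le> j \<Longrightarrow> chain_length z i \<le> chain_length z j"
  unfolding chain_length_def by (intro sum_mono2) auto

lemma dist_le_chain_length:
  "i \<le> j \<Longrightarrow> dist (z i) (z j) \<le> chain_length z j - chain_length z i"
proof (induction j)
  case (Suc j)
  show ?case
  proof (cases "i = Suc j")
    case False
    then have "dist (z i) (z j) \<le> chain_length z j - chain_length z i" using Suc by simp
    then show ?thesis
      using dist_triangle[of "z i" "z (Suc j)" "z j"] by (simp add: chain_length_def)
  qed simp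
qed simp

lemma chain_reaches_mono: "chain_reaches X e a K l \<Longrightarrow> l \<le> l' \<Longrightarrow> chain_reaches X e a K l'"
  unfolding chain_reaches_def by (metis order_trans)

lemma chain_reaches_refl: "a \<in> K \<Longrightarrow> a \<in> X \<Longrightarrow> chain_reaches X e a K 0"
  unfolding chain_reaches_def chain_length_def by (intro exI[of _ 0] exI[of _ "\<lambda>_. a"]) auto

lemma chain_reaches_extend:
  assumes "chain_reaches X e a K l" "excess_le K K' c" "c \<le> e"
    and "compact K'" "K' \<noteq> {}" "K' \<subseteq> X"
  shows "chain_reaches X e a K' (l + c)"
proof -
  obtain n z where z: "z 0 = a" "z n \<in> K" "\<forall>i\<le>n. z i \<in> X"
      "\<forall>i<n. dist (z i) (z (Suc i)) \<le> e" "chain_length z n \<le> l"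
    using assms(1) unfolding chain_reaches_def by blast
  obtain b where b: "b \<in> K'" "infdist (z n) K' = dist (z n) b"
    using infdist_attained_compact[OF assms(4,5)] by blast
  have last_step: "dist (z n) b \<le> c" using assms(2) z(2) b(2) unfolding excess_le_def by metis
  define z' where "z' = z(Suc n := b)"
  have "chain_length z' n = chain_length z n"
    unfolding chain_length_def by (rule sum.cong) (auto simp: z'_def)
  then have "chain_length z' (Suc n) \<le> l + c"
    using z(5) last_step by (simp add: chain_length_def z'_def)
  moreover have "\<forall>i\<le>Suc n. z' i \<in> X" using z(3) b(1) assms(6) by (auto simp: z'_def le_Suc_eq)
  moreover have "\<forall>i<Suc n. dist (z' i) (z' (Suc i)) \<le> e"
    using z(4) last_step assms(3) by (auto simp: z'_def less_Suc_eq)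
  moreover have "z' 0 = a" "z' (Suc n) \<in> K'" using z(1) b(1) by (auto simp: z'_def)
  ultimately show ?thesis unfolding chain_reaches_def by blast
qed

lemma chain_reaches_of_rect_path:
  assumes p: "rect_path X p x y" and e: "0 < e"
  shows "chain_reaches X e x {y} (real_of_ereal (path_len p))"
proof -
  have cont: "continuous_on {0..1} p" and img: "p ` {0..1} \<subseteq> X"
    and ends: "p 0 = x" "p 1 = y"
    using p unfolding rect_path_def by auto
  have "uniformly_continuous_on {0..1} p"
    by (rule compact_uniformly_continuous[OF cont]) simp
  then obtain d where d: "0 < d"
    "\<And>s t. s \<in> {0..1} \<Longrightarrow> t \<in> {0..1} \<Longrightarrow> dist t s < d \<Longrightarrow> dist (p t) (p s) < e"
    unfolding uniformly_continuous_on_def using e by metis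
  obtain N :: nat where N: "1 / d < N" using reals_Archimedean2 by blast
  then have N_pos: "0 < N" using d by (metis divide_pos_pos gr0I not_less_iff_gr_or_eq of_nat_0 zero_less_one)
  have mesh: "1 / real N < d" using N d N_pos by (simp add: field_simps)
  define t where "t i = real i / real N" for i
  define z where "z i = p (t i)" for i
  have t01: "t i \<in> {0..1}" if "i \<le> N" for i using that N_pos by (auto simp: t_def field_simps)
  have "t i < t (Suc i)" for i unfolding t_def using N_pos by (intro divide_strict_right_mono) auto
  moreover have "t 0 = 0" "t N = 1" using N_pos by (auto simp: t_def)
  ultimately have "ereal (chain_length z N) \<le> path_len p"
    using polygonal_le_path_len[of t N p] by (simp add: chain_length_def z_def)
  then have "chain_length z N \<le> real_of_ereal (path_len p)"
    using rect_path_len_finite[OF p] by (metis ereal_less_eq(3))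
  moreover have "dist (z i) (z (Suc i)) \<le> e" if "i < N" for i
  proof -
    have "dist (t (Suc i)) (t i) < d" using N_pos mesh by (simp add: t_def dist_real_def field_simps)
    then show ?thesis
      using d(2)[of "t i" "t (Suc i)"] t01[of i] t01[of "Suc i"] that by (simp add: z_def dist_commute)
  qed
  moreover have "z 0 = x" "z N = y" using ends \<open>t 0 = 0\<close> \<open>t N = 1\<close> by (auto simp: z_def)
  moreover have "\<forall>i\<le>N. z i \<in> X" using img t01 by (auto simp: z_def)
  ultimately show ?thesis unfolding chain_reaches_def by blast
qed

lemma exists_step_reparametrization:
  fixes c :: "nat \<Rightarrow> real"
  assumes c0: "c 0 = 0" and c_mono: "\<And>i j. i \<le> j \<Longrightarrow> c i \<le> c j"
    and c_step: "\<And>j. j < n \<Longrightarrow> c (Suc j) \<le> c j + e"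
    and cn: "c n \<le> L" and L: "0 < L" and e: "0 \<le> e"
  obtains J where "\<And>t. J t \<le> n" "c (J 0) = 0" "J 1 = n" "\<And>s t. s \<le> t \<Longrightarrow> J s \<le> J t"
    "\<And>s t. 0 \<le> s \<Longrightarrow> s \<le> t \<Longrightarrow> c (J t) - c (J s) \<le> L * (t - s) + e"
proof -
  define S where "S t = insert 0 {j. j \<le> n \<and> c j \<le> t * L}" for t
  define J where "J t = Max (S t)" for t
  have fin: "finite (S t)" for t unfolding S_def by auto
  have J_in: "J t \<in> S t" for t unfolding J_def using fin by (intro Max_in) (auto simp: S_def)
  have J_max: "j \<in> S t \<Longrightarrow> j \<le> J t" for j t unfolding J_def using fin by simp
  have J_le: "J t \<le> n" for t using J_in[of t] by (auto simp: S_def)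
  have c_J: "c (J t) \<le> t * L" if "0 \<le> t" for t
    using J_in[of t] that L c0 by (auto simp: S_def)
  have c_J_next: "t * L < c (Suc (J t))" if "J t < n" for t
  proof (rule ccontr)
    assume "\<not> ?thesis"
    then have "Suc (J t) \<in> S t" using that by (auto simp: S_def)
    then show False using J_max by fastforce
  qed
  have J_mono: "J s \<le> J t" if "s \<le> t" for s t
  proof -
    have "S s \<subseteq> S t" unfolding S_def using that L by (auto intro: order_trans mult_right_mono)
    then show ?thesis unfolding J_def using fin by (intro Max_mono) (auto simp: S_def)
  qed
  have "c (J 0) = 0" using c_J[of 0] c_mono[of 0 "J 0"] c0 by simp
  moreover have "J 1 = n" using J_max[of n 1] J_le[of 1] cn by (auto simp: S_def)
  moreover have "c (J t) - c (J s) \<le> L * (t - s) + e" if "0 \<le> s" "s \<le> t" for s t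
  proof (cases "J s < n")
    case True
    have "s * L < c (J s) + e" using c_J_next[OF True] c_step[OF True] by simp
    moreover have "c (J t) \<le> t * L" using c_J that by simp
    ultimately show ?thesis by (simp add: algebra_simps)
  next
    case False
    then have "J s = n" "J t = n" using J_le J_mono[OF that(2)] by (auto intro: le_antisym)
    then show ?thesis using that L e by simp
  qed
  ultimately show ?thesis using that J_le J_mono by blast
qed

(* No continuity is required of the paths, so these sets are closed in the product topology
   on real \<Rightarrow> 'a, where compactness of X carries over to functions with values in X. *)

definition near_lipschitz_paths :: "'a::metric_space \<Rightarrow> 'a set \<Rightarrow> real \<Rightarrow> real \<Rightarrow> (real \<Rightarrow> 'a) set"
  where "near_lipschitz_paths a K M d = {g. g 0 = a \<and> g 1 \<in> K \<and>
    (\<forall>s\<in>{0..1}. \<forall>t\<in>{0..1}. dist (g s) (g t) \<le> M * dist s t + d)}"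

lemma near_lipschitz_paths_mono:
  assumes "d \<le> d'"
  shows "near_lipschitz_paths a K M d \<subseteq> near_lipschitz_paths a K M d'"
proof
  fix g assume g: "g \<in> near_lipschitz_paths a K M d"
  have "dist (g s) (g t) \<le> M * dist s t + d'" if "s \<in> {0..1}" "t \<in> {0..1}" for s t
  proof -
    have "dist (g s) (g t) \<le> M * dist s t + d" using g that unfolding near_lipschitz_paths_def by blast
    then show ?thesis using assms by linarith
  qed
  then show "g \<in> near_lipschitz_paths a K M d'" using g unfolding near_lipschitz_paths_def by blast
qed

lemma closed_near_lipschitz_paths:
  fixes K :: "'a::metric_space set"
  assumes "closed K"
  shows "closed (near_lipschitz_paths a K M d)"
proof -
  have eq: "near_lipschitz_paths a K M d = {g. g 0 = a} \<inter> {g. g 1 \<in> K} \<inter>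
      (\<Inter>s\<in>{0..1}. \<Inter>t\<in>{0..1}. {g. dist (g s) (g t) \<le> M * dist s t + d})"
    unfolding near_lipschitz_paths_def by auto
  have "closed {g :: real \<Rightarrow> 'a. g 0 = a}"
    by (rule closed_Collect_eq) (auto intro: continuous_on_const)
  moreover have "closed {g :: real \<Rightarrow> 'a. g 1 \<in> K}"
    using closed_vimage[OF assms continuous_on_product_coordinates[of 1]] by (simp add: vimage_def)
  moreover have "closed {g :: real \<Rightarrow> 'a. dist (g s) (g t) \<le> M * dist s t + d}" for s t
    by (intro closed_Collect_le continuous_on_dist[OF continuous_on_product_coordinates
        continuous_on_product_coordinates] continuous_on_const)
  ultimately show ?thesis unfolding eq by (intro closed_Int closed_INT) auto
qed

lemma near_lipschitz_path_of_chain: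
  assumes "chain_reaches X e a K (M + e)" "0 < e" "0 \<le> M"
  shows "(UNIV \<rightarrow> X) \<inter> near_lipschitz_paths a K M (2 * e) \<noteq> {}"
proof -
  obtain n z where z: "z 0 = a" "z n \<in> K" "\<forall>i\<le>n. z i \<in> X"
      "\<forall>i<n. dist (z i) (z (Suc i)) \<le> e" "chain_length z n \<le> M + e"
    using assms(1) unfolding chain_reaches_def by blast
  have c0: "chain_length z 0 = 0" by (simp add: chain_length_def)
  have c_step: "chain_length z (Suc j) \<le> chain_length z j + e" if "j < n" for j
    using z(4) that by (simp add: chain_length_def)
  have L: "0 < M + e" and e: "0 \<le> e" using assms(2,3) by auto
  obtain J where J: "\<And>t. J t \<le> n" "chain_length z (J 0) = 0" "J 1 = n"
      "\<And>s t. s \<le> t \<Longrightarrow> J s \<le> J t"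
      "\<And>s t. 0 \<le> s \<Longrightarrow> s \<le> t \<Longrightarrow>
         chain_length z (J t) - chain_length z (J s) \<le> (M + e) * (t - s) + e"
    using exists_step_reparametrization[OF c0 chain_length_mono c_step z(5) L e] by metis
  define g where "g t = z (J t)" for t
  have g_le: "dist (g s) (g t) \<le> M * dist s t + 2 * e" if "0 \<le> s" "s \<le> t" "t \<le> 1" for s t
  proof -
    have "dist (g s) (g t) \<le> chain_length z (J t) - chain_length z (J s)"
      unfolding g_def using J(4)[OF that(2)] by (rule dist_le_chain_length)
    also have "\<dots> \<le> (M + e) * (t - s) + e" using J(5)[OF that(1,2)] .
    also have "\<dots> \<le> M * (t - s) + 2 * e"
    proof -
      have "e * (t - s) \<le> e" using that assms(2) by (intro mult_left_le) auto
      then show ?thesis by (simp add: algebra_simps)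
    qed
    finally show ?thesis using that(2) by (simp add: dist_real_def)
  qed
  have "dist (g s) (g t) \<le> M * dist s t + 2 * e" if "s \<in> {0..1}" "t \<in> {0..1}" for s t
    using g_le[of s t] g_le[of t s] that by (cases "s \<le> t") (simp_all add: dist_commute)
  moreover have "g 0 = a"
  proof -
    have "dist (z 0) (z (J 0)) \<le> 0" using dist_le_chain_length[of 0 "J 0" z] J(2) c0 by simp
    then show ?thesis using z(1) by (simp add: g_def)
  qed
  moreover have "g 1 \<in> K" using J(3) z(2) by (simp add: g_def)
  moreover have "g \<in> UNIV \<rightarrow> X" using J(1) z(3) by (simp add: g_def)
  ultimately have "g \<in> (UNIV \<rightarrow> X) \<inter> near_lipschitz_paths a K M (2 * e)"
    unfolding near_lipschitz_paths_def by blast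
  then show ?thesis by blast
qed

lemma compact_funcset: "compact X \<Longrightarrow> compact (UNIV \<rightarrow> X)"
proof -
  assume "compact X"
  then have "compactin (product_topology (\<lambda>_. euclidean) UNIV) (Pi\<^sub>E UNIV (\<lambda>_. X))"
    by (simp add: compactin_PiE)
  then show ?thesis by (simp add: euclidean_product_topology PiE_UNIV_domain)
qed

lemma lipschitz_path_of_chains:
  fixes X :: "'a::metric_space set"
  assumes "compact X" "closed K" "0 \<le> M"
    and chains: "\<And>e. 0 < e \<Longrightarrow> chain_reaches X e a K (M + e)"
  shows "\<exists>g :: real \<Rightarrow> 'a. g 0 = a \<and> g 1 \<in> K \<and> g ` {0..1} \<subseteq> X \<and> M-lipschitz_on {0..1} g"
proof -
  let ?P = "near_lipschitz_paths a K M"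
  have "(UNIV \<rightarrow> X) \<inter> \<Inter>(?P ` D) \<noteq> {}" if "finite D" "D \<subseteq> {0<..}" for D
  proof -
    define d where "d = (if D = {} then 1 else Min D)"
    have "0 < d" using that by (auto simp: d_def)
    then have "0 < d / 2" by simp
    from near_lipschitz_path_of_chain[OF chains[OF this] this assms(3)]
    have "(UNIV \<rightarrow> X) \<inter> ?P d \<noteq> {}" by simp
    moreover have "?P d \<subseteq> ?P d'" if "d' \<in> D" for d'
      using that \<open>finite D\<close> by (intro near_lipschitz_paths_mono) (auto simp: d_def)
    ultimately show ?thesis by blast
  qed
  then have "(UNIV \<rightarrow> X) \<inter> (\<Inter>d\<in>{0<..}. ?P d) \<noteq> {}"
    using compact_imp_fip_image[OF compact_funcset[OF assms(1)], of "{0<..}" ?P]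
      closed_near_lipschitz_paths[OF assms(2)] by blast
  then obtain g where g: "g \<in> UNIV \<rightarrow> X" "\<And>d. 0 < d \<Longrightarrow> g \<in> ?P d" by blast
  have "dist (g s) (g t) \<le> M * dist s t" if "s \<in> {0..1}" "t \<in> {0..1}" for s t
  proof (rule field_le_epsilon)
    fix d :: real assume "0 < d"
    then show "dist (g s) (g t) \<le> M * dist s t + d"
      using g(2)[of d] that by (simp add: near_lipschitz_paths_def)
  qed
  then have "M-lipschitz_on {0..1} g" using assms(3) by (intro lipschitz_onI)
  moreover have "g 0 = a" "g 1 \<in> K" using g(2)[of 1] by (simp_all add: near_lipschitz_paths_def)
  moreover have "g ` {0..1} \<subseteq> X" using g(1) by (simp add: Pi_iff image_subset_iff)
  ultimately show ?thesis by blast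
qed

section \<open>Baire category on the unit interval\<close>

lemma closed_cover_interior_point:
  fixes C :: "'i::countable \<Rightarrow> real set"
  assumes closed: "\<And>i. closed (C i)" and cover: "{0..1} \<subseteq> (\<Union>i. C i)"
  obtains i u \<epsilon> where "u \<in> {0..1}" "0 < \<epsilon>" "\<And>y. y \<in> {0..1} \<Longrightarrow> dist y u < \<epsilon> \<Longrightarrow> y \<in> C i"
proof -
  have "\<exists>i. \<not> {0..1} \<subseteq> closure ({0..1} - C i)"
  proof (rule ccontr)
    assume "\<nexists>i. \<not> {0..1} \<subseteq> closure ({0..1} - C i)"
    then have dense: "{0..1} \<subseteq> closure ({0..1} - C i)" for i by blast
    have "{0..1::real} \<subseteq> closure (\<Inter>i. {0..1} - C i)"
    proof (rule Baire)
      show "closed {0..1::real}" by simp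
      show "countable (range (\<lambda>i. {0..1} - C i))" by simp
      fix T assume "T \<in> range (\<lambda>i. {0..1} - C i)"
      then obtain i where T: "T = {0..1} - C i" by blast
      have "openin (top_of_set {0..1}) T"
        unfolding T using closed[of i] by (simp add: Diff_eq openin_open_Int open_Compl)
      then show "openin (top_of_set {0..1}) T \<and> {0..1} \<subseteq> closure T" using dense T by simp
    qed
    moreover have "(\<Inter>i. {0..1} - C i) = {}" using cover by blast
    ultimately have "{0..1::real} \<subseteq> {}" by (metis closure_empty)
    then show False by simp
  qed
  then obtain i u where "u \<in> {0..1}" "u \<notin> closure ({0..1} - C i)" by blast
  then show ?thesis using that unfolding closure_approachable by blast
qed

lemma closed_cover_contains_interval:
  fixes C :: "'i::countable \<Rightarrow> real set"
  assumes "\<And>i. closed (C i)" "{0..1} \<subseteq> (\<Union>i. C i)"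
  obtains i \<alpha> \<tau> where "0 \<le> \<alpha>" "0 < \<tau>" "\<alpha> + \<tau> \<le> 1" "{\<alpha>..\<alpha>+\<tau>} \<subseteq> C i"
proof -
  obtain i u \<epsilon> where u: "u \<in> {0..1}" and "0 < \<epsilon>"
    and ball: "\<And>y. y \<in> {0..1} \<Longrightarrow> dist y u < \<epsilon> \<Longrightarrow> y \<in> C i"
    using closed_cover_interior_point[OF assms] by metis
  define \<tau> where "\<tau> = min (\<epsilon> / 2) (1 / 2)"
  define \<alpha> where "\<alpha> = (if u \<le> 1 / 2 then u else u - \<tau>)"
  have \<tau>: "0 < \<tau>" "\<tau> < \<epsilon>" "\<tau> \<le> 1 / 2" using \<open>0 < \<epsilon>\<close> by (auto simp: \<tau>_def)
  have "{\<alpha>..\<alpha>+\<tau>} \<subseteq> C i"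
  proof
    fix y assume y: "y \<in> {\<alpha>..\<alpha>+\<tau>}"
    have "y \<in> {0..1}" "dist y u < \<epsilon>"
      using y u \<tau> by (auto simp: \<alpha>_def dist_real_def split: if_splits)
    then show "y \<in> C i" by (rule ball)
  qed
  moreover have "0 \<le> \<alpha>" "\<alpha> + \<tau> \<le> 1" using u \<tau> by (auto simp: \<alpha>_def)
  ultimately show ?thesis using that \<tau>(1) by blast
qed

section \<open>Locally contracting families of compact sets\<close>

(* A t plays the role of F (q t) for an L-Lipschitz path q. *)

locale locally_contracting_family =
  fixes X :: "'a::metric_space set" and A :: "real \<Rightarrow> 'a set" and L :: real
  assumes compact_family: "t \<in> {0..1} \<Longrightarrow> compact (A t)"
    and family_nonempty: "t \<in> {0..1} \<Longrightarrow> A t \<noteq> {}"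
    and family_subset: "t \<in> {0..1} \<Longrightarrow> A t \<subseteq> X"
    and L_pos: "0 < L"
    and locally_contracting: "u \<in> {0..1} \<Longrightarrow> \<exists>\<beta> r. \<beta> < 1 \<and> 0 < r \<and>
      (\<forall>s\<in>{0..1}. \<bar>s - u\<bar> < r \<longrightarrow>
        excess_le (A u) (A s) (\<beta> * L * \<bar>s - u\<bar>) \<and> excess_le (A s) (A u) (\<beta> * L * \<bar>s - u\<bar>))"
begin

definition contraction_set :: "real \<Rightarrow> real \<Rightarrow> real set" where
  "contraction_set \<beta> r = {u \<in> {0..1}. \<forall>s\<in>{0..1}. \<bar>s - u\<bar> < r \<longrightarrow>
      excess_le (A u) (A s) (\<beta> * L * \<bar>s - u\<bar>)}"

lemma excess_le_near:
  assumes "u \<in> {0..1}"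
  obtains r where "0 < r" "\<And>s. s \<in> {0..1} \<Longrightarrow> \<bar>s - u\<bar> < r \<Longrightarrow>
    excess_le (A u) (A s) (L * \<bar>s - u\<bar>) \<and> excess_le (A s) (A u) (L * \<bar>s - u\<bar>)"
proof -
  obtain \<beta> r where "\<beta> < 1" "0 < r" and near: "\<forall>s\<in>{0..1}. \<bar>s - u\<bar> < r \<longrightarrow>
      excess_le (A u) (A s) (\<beta> * L * \<bar>s - u\<bar>) \<and> excess_le (A s) (A u) (\<beta> * L * \<bar>s - u\<bar>)"
    using locally_contracting[OF assms] by blast
  have "\<beta> * (L * \<bar>s - u\<bar>) \<le> 1 * (L * \<bar>s - u\<bar>)" for s
    using \<open>\<beta> < 1\<close> L_pos by (intro mult_right_mono) auto
  then have "\<beta> * L * \<bar>s - u\<bar> \<le> L * \<bar>s - u\<bar>" for s by (simp add: mult.assoc)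
  then show ?thesis using that[OF \<open>0 < r\<close>] near by (meson excess_le_mono)
qed

lemma chain_reaches_step:
  assumes "chain_reaches X e a (A s) l" "t \<in> {0..1}" "excess_le (A s) (A t) c" "c \<le> e"
  shows "chain_reaches X e a (A t) (l + c)"
  using chain_reaches_extend[OF assms(1,3,4)] compact_family family_nonempty family_subset assms(2)
  by blast

lemma chain_reaches_across:
  assumes e: "0 < e" and \<sigma>: "\<sigma> \<in> {0..1}"
  obtains \<rho> where "0 < \<rho>"
    "\<And>a l t t'. t \<in> {0..1} \<Longrightarrow> t' \<in> {0..1} \<Longrightarrow> \<sigma> - \<rho> < t \<Longrightarrow> t \<le> \<sigma> \<Longrightarrow> \<sigma> \<le> t' \<Longrightarrow>
      t' < \<sigma> + \<rho> \<Longrightarrow> chain_reaches X e a (A t) l \<Longrightarrow> chain_reaches X e a (A t') (l + L * (t' - t))"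
proof -
  obtain r where "0 < r" and near: "\<And>t. t \<in> {0..1} \<Longrightarrow> \<bar>t - \<sigma>\<bar> < r \<Longrightarrow>
      excess_le (A \<sigma>) (A t) (L * \<bar>t - \<sigma>\<bar>) \<and> excess_le (A t) (A \<sigma>) (L * \<bar>t - \<sigma>\<bar>)"
    using excess_le_near[OF \<sigma>] by blast
  define \<rho> where "\<rho> = min r (e / L)"
  have \<rho>: "0 < \<rho>" "\<rho> \<le> r" "L * \<rho> \<le> e"
    using \<open>0 < r\<close> e L_pos by (auto simp: \<rho>_def field_simps min_def)
  have cost: "L * d \<le> e" if "d < \<rho>" for d
  proof -
    have "L * d \<le> L * \<rho>" using that L_pos by (intro mult_left_mono) auto
    then show ?thesis using \<rho>(3) by linarith
  qed
  have "chain_reaches X e a (A t') (l + L * (t' - t))"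
    if t: "t \<in> {0..1}" "t' \<in> {0..1}" "\<sigma> - \<rho> < t" "t \<le> \<sigma>" "\<sigma> \<le> t'" "t' < \<sigma> + \<rho>"
      and start: "chain_reaches X e a (A t) l" for a l t t'
  proof -
    have "excess_le (A t) (A \<sigma>) (L * (\<sigma> - t))" using near[OF t(1)] t(3,4) \<rho>(2) by auto
    with start have "chain_reaches X e a (A \<sigma>) (l + L * (\<sigma> - t))"
      using chain_reaches_step \<sigma> cost t(3) by simp
    moreover have "excess_le (A \<sigma>) (A t') (L * (t' - \<sigma>))" using near[OF t(2)] t(5,6) \<rho>(2) by auto
    ultimately have "chain_reaches X e a (A t') (l + L * (\<sigma> - t) + L * (t' - \<sigma>))"
      using chain_reaches_step t(2) cost t(6) by simp
    then show ?thesis by (simp add: algebra_simps)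
  qed
  with \<rho>(1) show ?thesis by (rule that)
qed

lemma chain_reaches_advance:
  assumes e: "0 < e" and s: "0 \<le> s\<^sub>0" "s\<^sub>0 \<le> s\<^sub>1" "s\<^sub>1 \<le> 1"
    and start: "chain_reaches X e a (A s\<^sub>0) l"
  shows "chain_reaches X e a (A s\<^sub>1) (l + L * (s\<^sub>1 - s\<^sub>0))"
proof -
  define S where "S = {t. s\<^sub>0 \<le> t \<and> t \<le> s\<^sub>1 \<and> chain_reaches X e a (A t) (l + L * (t - s\<^sub>0))}"
  have "s\<^sub>0 \<in> S" using s start by (simp add: S_def)
  have bdd: "bdd_above S" by (rule bdd_aboveI[of _ s\<^sub>1]) (auto simp: S_def)
  define \<sigma> where "\<sigma> = Sup S"
  have "s\<^sub>0 \<le> \<sigma>" unfolding \<sigma>_def using \<open>s\<^sub>0 \<in> S\<close> bdd by (rule cSup_upper)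
  have "\<sigma> \<le> s\<^sub>1" unfolding \<sigma>_def using \<open>s\<^sub>0 \<in> S\<close> by (intro cSup_least) (auto simp: S_def)
  have \<sigma>01: "\<sigma> \<in> {0..1}" using \<open>s\<^sub>0 \<le> \<sigma>\<close> \<open>\<sigma> \<le> s\<^sub>1\<close> s by auto
  obtain \<rho> where "0 < \<rho>" and across:
    "\<And>a l t t'. t \<in> {0..1} \<Longrightarrow> t' \<in> {0..1} \<Longrightarrow> \<sigma> - \<rho> < t \<Longrightarrow> t \<le> \<sigma> \<Longrightarrow> \<sigma> \<le> t' \<Longrightarrow>
      t' < \<sigma> + \<rho> \<Longrightarrow> chain_reaches X e a (A t) l \<Longrightarrow> chain_reaches X e a (A t') (l + L * (t' - t))"
    using chain_reaches_across[OF e \<sigma>01] by metis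
  obtain t where "t \<in> S" "\<sigma> - \<rho> < t"
    using less_cSup_iff[OF _ bdd, of "\<sigma> - \<rho>"] \<open>s\<^sub>0 \<in> S\<close> \<open>0 < \<rho>\<close> unfolding \<sigma>_def by auto
  have "t \<le> \<sigma>" unfolding \<sigma>_def using \<open>t \<in> S\<close> bdd by (rule cSup_upper)
  have "t \<in> {0..1}" "chain_reaches X e a (A t) (l + L * (t - s\<^sub>0))"
    using \<open>t \<in> S\<close> s by (auto simp: S_def)
  from across[OF this(1) \<sigma>01 \<open>\<sigma> - \<rho> < t\<close> \<open>t \<le> \<sigma>\<close> order_refl _ this(2)] \<open>0 < \<rho>\<close>
  have reach_\<sigma>: "chain_reaches X e a (A \<sigma>) (l + L * (\<sigma> - s\<^sub>0))" by (simp add: algebra_simps)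
  have "\<sigma> = s\<^sub>1"
  proof (rule ccontr)
    assume "\<sigma> \<noteq> s\<^sub>1"
    define t' where "t' = min s\<^sub>1 (\<sigma> + \<rho> / 2)"
    have "\<sigma> < t'" "t' < \<sigma> + \<rho>" "t' \<le> s\<^sub>1"
      using \<open>\<sigma> \<noteq> s\<^sub>1\<close> \<open>\<sigma> \<le> s\<^sub>1\<close> \<open>0 < \<rho>\<close> by (auto simp: t'_def min_def)
    moreover have "t' \<in> {0..1}" using \<open>\<sigma> < t'\<close> \<open>t' \<le> s\<^sub>1\<close> \<open>s\<^sub>0 \<le> \<sigma>\<close> s by auto
    ultimately have "chain_reaches X e a (A t') (l + L * (\<sigma> - s\<^sub>0) + L * (t' - \<sigma>))"
      using across[OF \<sigma>01 _ _ order_refl _ _ reach_\<sigma>] \<open>0 < \<rho>\<close> by simp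
    then have "t' \<in> S"
      using \<open>s\<^sub>0 \<le> \<sigma>\<close> \<open>\<sigma> < t'\<close> \<open>t' \<le> s\<^sub>1\<close> by (simp add: S_def algebra_simps)
    then have "t' \<le> \<sigma>" unfolding \<sigma>_def using bdd by (rule cSup_upper)
    then show False using \<open>\<sigma> < t'\<close> by simp
  qed
  then show ?thesis using reach_\<sigma> by simp
qed

lemma chain_reaches_advance_uniformly:
  assumes e: "0 < e" and I: "0 \<le> \<alpha>" "0 < \<tau>" "\<alpha> + \<tau> \<le> 1" and "\<beta> \<le> 1" "0 < r"
    and uniform: "{\<alpha>..\<alpha>+\<tau>} \<subseteq> contraction_set \<beta> r"
    and start: "chain_reaches X e a (A \<alpha>) l"
  shows "chain_reaches X e a (A (\<alpha> + \<tau>)) (l + \<beta> * L * \<tau>)"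
proof -
  define \<rho> where "\<rho> = min r (e / L)"
  have \<rho>: "0 < \<rho>" "\<rho> \<le> r" "L * \<rho> \<le> e"
    using \<open>0 < r\<close> e L_pos by (auto simp: \<rho>_def field_simps min_def)
  obtain N :: nat where N: "\<tau> / \<rho> < N" using reals_Archimedean2 by blast
  then have "0 < N" using I(2) \<rho>(1) by (metis divide_pos_pos gr0I of_nat_0 order.asym)
  define h where "h = \<tau> / N"
  have h: "0 < h" "h < \<rho>" "real N * h = \<tau>"
    using I(2) \<rho>(1) N \<open>0 < N\<close> by (auto simp: h_def field_simps)
  have "\<beta> * L * h \<le> 1 * L * h" using \<open>\<beta> \<le> 1\<close> L_pos h(1) by (intro mult_right_mono) auto
  also have "\<dots> \<le> L * \<rho>" using h(2) L_pos by simp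
  finally have step_cost: "\<beta> * L * h \<le> e" using \<rho>(3) by linarith
  have "chain_reaches X e a (A (\<alpha> + real j * h)) (l + \<beta> * L * (real j * h))" if "j \<le> N" for j
    using that
  proof (induction j)
    case 0
    then show ?case using start by simp
  next
    case (Suc j)
    define u where "u = \<alpha> + real j * h"
    have "real (Suc j) * h \<le> real N * h" using Suc.prems h(1) by (intro mult_right_mono) auto
    then have "u + h \<le> \<alpha> + \<tau>" using h(3) by (simp add: u_def algebra_simps)
    then have u: "u \<in> {\<alpha>..\<alpha>+\<tau>}" "u + h \<in> {0..1}" using h(1) I by (auto simp: u_def)
    have "u \<in> contraction_set \<beta> r" using u(1) uniform by blast
    moreover have "\<bar>(u + h) - u\<bar> < r" using h(1,2) \<rho>(2) by simp
    ultimately have "excess_le (A u) (A (u + h)) (\<beta> * L * \<bar>(u + h) - u\<bar>)"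
      using u(2) unfolding contraction_set_def by blast
    then have "excess_le (A u) (A (u + h)) (\<beta> * L * h)" using h(1) by simp
    then have "chain_reaches X e a (A (u + h)) (l + \<beta> * L * (real j * h) + \<beta> * L * h)"
      using chain_reaches_step Suc u(2) step_cost by (simp add: u_def)
    then show ?case by (simp add: u_def algebra_simps)
  qed
  from this[of N] show ?thesis using h(3) by simp
qed

lemma excess_le_at_limit:
  assumes \<beta>: "0 \<le> \<beta>" "\<beta> \<le> 1" and x: "\<And>n. x n \<in> contraction_set \<beta> r" and lim: "x \<longlonglongrightarrow> u"
    and u: "u \<in> {0..1}" and s: "s \<in> {0..1}" "\<bar>s - u\<bar> < r" and "0 < \<delta>"
  shows "excess_le (A u) (A s) (\<beta> * L * \<bar>s - u\<bar> + \<delta>)"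
proof -
  have x01: "x n \<in> {0..1}" for n using x by (simp add: contraction_set_def)
  obtain r\<^sub>u where "0 < r\<^sub>u" and near: "\<And>t. t \<in> {0..1} \<Longrightarrow> \<bar>t - u\<bar> < r\<^sub>u \<Longrightarrow>
      excess_le (A u) (A t) (L * \<bar>t - u\<bar>) \<and> excess_le (A t) (A u) (L * \<bar>t - u\<bar>)"
    using excess_le_near[OF u] by metis
  define \<eta> where "\<eta> = min r\<^sub>u (min (r - \<bar>s - u\<bar>) (\<delta> / (2 * L)))"
  have "0 < \<eta>" using \<open>0 < r\<^sub>u\<close> s(2) \<open>0 < \<delta>\<close> L_pos by (simp add: \<eta>_def)
  then obtain n where "dist (x n) u < \<eta>" using lim unfolding LIMSEQ_def by blast
  then have n: "\<bar>x n - u\<bar> < \<eta>" by (simp add: dist_real_def)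
  then have to_xn: "excess_le (A u) (A (x n)) (L * \<bar>x n - u\<bar>)"
    using near[OF x01, THEN conjunct1] by (simp add: \<eta>_def)
  have "\<bar>x n - u\<bar> < r - \<bar>s - u\<bar>" using n by (simp add: \<eta>_def)
  then have "\<bar>s - x n\<bar> < r" by arith
  then have from_xn: "excess_le (A (x n)) (A s) (\<beta> * L * \<bar>s - x n\<bar>)"
    using x s(1) by (simp add: contraction_set_def)
  have "excess_le (A u) (A s) (L * \<bar>x n - u\<bar> + \<beta> * L * \<bar>s - x n\<bar>)"
    by (rule excess_le_trans[OF to_xn from_xn compact_family[OF x01] family_nonempty[OF x01]])
  moreover have "L * \<bar>x n - u\<bar> + \<beta> * L * \<bar>s - x n\<bar> \<le> \<beta> * L * \<bar>s - u\<bar> + \<delta>"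
  proof -
    have "\<beta> * L * \<bar>s - x n\<bar> \<le> \<beta> * L * (\<bar>s - u\<bar> + \<bar>x n - u\<bar>)"
      using \<beta>(1) L_pos by (intro mult_left_mono) auto
    also have "\<dots> = \<beta> * L * \<bar>s - u\<bar> + \<beta> * (L * \<bar>x n - u\<bar>)" by (simp add: algebra_simps)
    also have "\<dots> \<le> \<beta> * L * \<bar>s - u\<bar> + 1 * (L * \<bar>x n - u\<bar>)"
      using \<beta>(2) L_pos by (intro add_left_mono mult_right_mono) auto
    finally have "\<beta> * L * \<bar>s - x n\<bar> \<le> \<beta> * L * \<bar>s - u\<bar> + L * \<bar>x n - u\<bar>" by simp
    moreover have "\<bar>x n - u\<bar> < \<delta> / (2 * L)" using n by (simp add: \<eta>_def)
    then have "L * \<bar>x n - u\<bar> < \<delta> / 2" using L_pos by (simp add: field_simps)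
    ultimately show ?thesis by linarith
  qed
  ultimately show ?thesis by (rule excess_le_mono)
qed

lemma closed_contraction_set:
  assumes "0 \<le> \<beta>" "\<beta> \<le> 1"
  shows "closed (contraction_set \<beta> r)"
proof (unfold closed_sequential_limits, intro allI impI, elim conjE)
  fix x :: "nat \<Rightarrow> real" and u
  assume x: "\<forall>n. x n \<in> contraction_set \<beta> r" and lim: "x \<longlonglongrightarrow> u"
  have "\<forall>n. x n \<in> {0..1}" using x by (simp add: contraction_set_def)
  with lim have u: "u \<in> {0..1}" using closed_sequentially[OF closed_atLeastAtMost] by blast
  have "excess_le (A u) (A s) (\<beta> * L * \<bar>s - u\<bar>)" if s: "s \<in> {0..1}" "\<bar>s - u\<bar> < r" for s
    unfolding excess_le_def
  proof
    fix a assume "a \<in> A u"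
    show "infdist a (A s) \<le> \<beta> * L * \<bar>s - u\<bar>"
    proof (rule field_le_epsilon)
      fix \<delta> :: real assume "0 < \<delta>"
      from excess_le_at_limit[OF assms x[rule_format] lim u s this] \<open>a \<in> A u\<close>
      show "infdist a (A s) \<le> \<beta> * L * \<bar>s - u\<bar> + \<delta>" unfolding excess_le_def by blast
    qed
  qed
  then show "u \<in> contraction_set \<beta> r" using u by (simp add: contraction_set_def)
qed

lemma contraction_set_cover:
  "{0..1} \<subseteq> (\<Union>(k, m). contraction_set (1 - 1 / real (Suc k)) (1 / real (Suc m)))"
proof
  fix u :: real assume u: "u \<in> {0..1}"
  obtain \<beta> r where "\<beta> < 1" "0 < r" and near: "\<forall>s\<in>{0..1}. \<bar>s - u\<bar> < r \<longrightarrow>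
      excess_le (A u) (A s) (\<beta> * L * \<bar>s - u\<bar>) \<and> excess_le (A s) (A u) (\<beta> * L * \<bar>s - u\<bar>)"
    using locally_contracting[OF u] by blast
  obtain k where k: "1 / real (Suc k) < 1 - \<beta>"
    using reals_Archimedean[of "1 - \<beta>"] \<open>\<beta> < 1\<close> by (auto simp: inverse_eq_divide)
  obtain m where m: "1 / real (Suc m) < r"
    using reals_Archimedean[of r] \<open>0 < r\<close> by (auto simp: inverse_eq_divide)
  have "excess_le (A u) (A s) ((1 - 1 / real (Suc k)) * L * \<bar>s - u\<bar>)"
    if "s \<in> {0..1}" "\<bar>s - u\<bar> < 1 / real (Suc m)" for s
  proof -
    have "excess_le (A u) (A s) (\<beta> * L * \<bar>s - u\<bar>)" using near that m by auto
    moreover have "\<beta> * L * \<bar>s - u\<bar> \<le> (1 - 1 / real (Suc k)) * L * \<bar>s - u\<bar>"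
      using k L_pos by (intro mult_right_mono) auto
    ultimately show ?thesis by (rule excess_le_mono)
  qed
  then have "u \<in> contraction_set (1 - 1 / real (Suc k)) (1 / real (Suc m))"
    using u by (simp add: contraction_set_def)
  then show "u \<in> (\<Union>(k, m). contraction_set (1 - 1 / real (Suc k)) (1 / real (Suc m)))"
    by blast
qed

lemma exists_uniform_interval:
  obtains \<beta> r \<alpha> \<tau> where "0 \<le> \<beta>" "\<beta> < 1" "0 < r" "0 \<le> \<alpha>" "0 < \<tau>" "\<alpha> + \<tau> \<le> 1"
    "{\<alpha>..\<alpha>+\<tau>} \<subseteq> contraction_set \<beta> r"
proof -
  define C :: "nat \<times> nat \<Rightarrow> real set"
    where "C = (\<lambda>(k, m). contraction_set (1 - 1 / real (Suc k)) (1 / real (Suc m)))"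
  have "closed (C i)" for i
    unfolding C_def by (cases i) (simp add: closed_contraction_set)
  moreover have "{0..1} \<subseteq> (\<Union>i. C i)" using contraction_set_cover unfolding C_def .
  ultimately obtain i \<alpha> \<tau> where "0 \<le> \<alpha>" "0 < \<tau>" "\<alpha> + \<tau> \<le> 1" "{\<alpha>..\<alpha>+\<tau>} \<subseteq> C i"
    by (rule closed_cover_contains_interval)
  moreover obtain k m where "i = (k, m)" by fastforce
  ultimately have "0 \<le> \<alpha>" "0 < \<tau>" "\<alpha> + \<tau> \<le> 1"
      "{\<alpha>..\<alpha>+\<tau>} \<subseteq> contraction_set (1 - 1 / real (Suc k)) (1 / real (Suc m))"
    by (simp_all add: C_def)
  moreover have "0 \<le> 1 - 1 / real (Suc k)" "1 - 1 / real (Suc k) < 1" "0 < 1 / real (Suc m)"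
    by auto
  ultimately show ?thesis using that by blast
qed

lemma exists_shorter_chains:
  "\<exists>G. 0 \<le> G \<and> G < L \<and> (\<forall>a\<in>A 0. \<forall>e>0. chain_reaches X e a (A 1) (G + e))"
proof -
  obtain \<beta> r \<alpha> \<tau> where \<beta>: "0 \<le> \<beta>" "\<beta> < 1" and "0 < r"
    and I: "0 \<le> \<alpha>" "0 < \<tau>" "\<alpha> + \<tau> \<le> 1" and uniform: "{\<alpha>..\<alpha>+\<tau>} \<subseteq> contraction_set \<beta> r"
    by (rule exists_uniform_interval)
  define G where "G = L * \<alpha> + \<beta> * L * \<tau> + L * (1 - (\<alpha> + \<tau>))"
  have "\<beta> * L * \<tau> < 1 * L * \<tau>" using \<beta>(2) L_pos I(2) by (intro mult_strict_right_mono) auto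
  then have "G < L" by (simp add: G_def algebra_simps)
  have "0 \<le> G" using \<beta>(1) I L_pos by (simp add: G_def)
  have "chain_reaches X e a (A 1) (G + e)" if "a \<in> A 0" "0 < e" for a e
  proof -
    have "chain_reaches X e a (A 0) 0" using that family_subset[of 0] by (auto intro: chain_reaches_refl)
    moreover have "\<alpha> \<le> 1" using I by simp
    ultimately have "chain_reaches X e a (A \<alpha>) (0 + L * (\<alpha> - 0))"
      using chain_reaches_advance[OF \<open>0 < e\<close> order_refl I(1)] by blast
    then have "chain_reaches X e a (A (\<alpha> + \<tau>)) (L * \<alpha> + \<beta> * L * \<tau>)"
      using chain_reaches_advance_uniformly[OF \<open>0 < e\<close> I _ \<open>0 < r\<close> uniform] \<beta>(2) by simp
    moreover have "0 \<le> \<alpha> + \<tau>" using I by simp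
    ultimately have "chain_reaches X e a (A 1) (L * \<alpha> + \<beta> * L * \<tau> + L * (1 - (\<alpha> + \<tau>)))"
      using chain_reaches_advance[OF \<open>0 < e\<close> _ I(3) order_refl] by blast
    then show ?thesis by (rule chain_reaches_mono) (use \<open>0 < e\<close> in \<open>simp add: G_def\<close>)
  qed
  with \<open>0 \<le> G\<close> \<open>G < L\<close> show ?thesis by blast
qed

end

section \<open>Shrinking in the length metric\<close>

lemma locally_contracting_family_along_path:
  fixes q :: "real \<Rightarrow> 'a::metric_space"
  assumes spc: "setvalued_pointwise_contraction X F" and KX: "maps_into_KX X F"
    and q: "L-lipschitz_on {0..1} q" "q ` {0..1} \<subseteq> X" and L: "0 < L"
  shows "locally_contracting_family X (\<lambda>t. F (q t)) L"
proof
  fix t :: real assume "t \<in> {0..1}"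
  then have "q t \<in> X" using q(2) by blast
  then show "compact (F (q t))" "F (q t) \<noteq> {}" "F (q t) \<subseteq> X"
    using KX unfolding maps_into_KX_def by auto
next
  show "0 < L" by (rule L)
next
  fix u :: real assume u: "u \<in> {0..1}"
  then have "q u \<in> X" using q(2) by blast
  then obtain \<beta> N where \<beta>: "0 \<le> \<beta>" "\<beta> < 1" and N: "openin (top_of_set X) N" "q u \<in> N"
      and contr: "\<forall>y\<in>N. hdist dist (F (q u)) (F y) \<le> ereal (\<beta> * dist (q u) y)"
    using spc unfolding setvalued_pointwise_contraction_def by blast
  obtain \<epsilon> where "0 < \<epsilon>" and ball: "\<And>y. y \<in> X \<Longrightarrow> dist y (q u) < \<epsilon> \<Longrightarrow> y \<in> N"
    using N unfolding openin_euclidean_subtopology_iff by blast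
  have "excess_le (F (q u)) (F (q s)) (\<beta> * L * \<bar>s - u\<bar>) \<and>
      excess_le (F (q s)) (F (q u)) (\<beta> * L * \<bar>s - u\<bar>)"
    if s: "s \<in> {0..1}" "\<bar>s - u\<bar> < \<epsilon> / L" for s
  proof -
    have dist_q: "dist (q u) (q s) \<le> L * \<bar>s - u\<bar>"
      using lipschitz_onD[OF q(1) u s(1)] by (simp add: dist_real_def abs_minus_commute)
    also have "\<dots> < \<epsilon>" using s(2) L by (simp add: field_simps)
    finally have "q s \<in> N" using ball q(2) s(1) by (simp add: dist_commute image_subset_iff)
    then have "hdist dist (F (q u)) (F (q s)) \<le> ereal (\<beta> * dist (q u) (q s))" using contr by blast
    moreover have "F (q u) \<noteq> {}" "F (q s) \<noteq> {}"
      using KX \<open>q u \<in> X\<close> q(2) s(1) unfolding maps_into_KX_def by (auto simp: image_subset_iff)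
    moreover have "\<beta> * dist (q u) (q s) \<le> \<beta> * L * \<bar>s - u\<bar>"
      using mult_left_mono[OF dist_q \<beta>(1)] by (simp add: mult.assoc)
    ultimately show ?thesis using excess_le_of_hdist excess_le_mono by metis
  qed
  then show "\<exists>\<beta> r. \<beta> < 1 \<and> 0 < r \<and> (\<forall>s\<in>{0..1}. \<bar>s - u\<bar> < r \<longrightarrow>
      excess_le (F (q u)) (F (q s)) (\<beta> * L * \<bar>s - u\<bar>) \<and>
      excess_le (F (q s)) (F (q u)) (\<beta> * L * \<bar>s - u\<bar>))"
    using \<beta>(2) \<open>0 < \<epsilon>\<close> L by (intro exI[of _ \<beta>] exI[of _ "\<epsilon> / L"]) auto
qed

lemma shorter_lipschitz_paths_between_images:
  fixes q :: "real \<Rightarrow> 'a::metric_space"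
  assumes "compact X" "setvalued_pointwise_contraction X F" "maps_into_KX X F"
    and q: "L-lipschitz_on {0..1} q" "q ` {0..1} \<subseteq> X" and "0 < L"
  shows "\<exists>G<L. \<forall>a\<in>F (q 0). \<exists>g :: real \<Rightarrow> 'a. g 0 = a \<and> g 1 \<in> F (q 1) \<and>
    g ` {0..1} \<subseteq> X \<and> G-lipschitz_on {0..1} g"
proof -
  interpret locally_contracting_family X "\<lambda>t. F (q t)" L
    by (rule locally_contracting_family_along_path[OF assms(2,3) q \<open>0 < L\<close>])
  obtain G where G: "0 \<le> G" "G < L"
    and chains: "\<forall>a\<in>F (q 0). \<forall>e>0. chain_reaches X e a (F (q 1)) (G + e)"
    using exists_shorter_chains by blast
  have "closed (F (q 1))" using compact_family[of 1] by (simp add: compact_imp_closed)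
  then have "\<exists>g :: real \<Rightarrow> 'a. g 0 = a \<and> g 1 \<in> F (q 1) \<and> g ` {0..1} \<subseteq> X \<and> G-lipschitz_on {0..1} g"
    if "a \<in> F (q 0)" for a
    using lipschitz_path_of_chains[OF assms(1) _ G(1)] chains that by blast
  then show ?thesis using G(2) by blast
qed

lemma exists_lipschitz_geodesic:
  fixes X :: "'a::metric_space set"
  assumes "compact X" "rect_path_connected X" "x \<in> X" "y \<in> X"
  obtains q :: "real \<Rightarrow> 'a" where "q 0 = x" "q 1 = y" "q ` {0..1} \<subseteq> X"
    "(d_r X x y)-lipschitz_on {0..1} q"
proof -
  have "chain_reaches X e x {y} (d_r X x y + e)" if e: "0 < e" for e
  proof -
    obtain p where p: "rect_path X p x y" "real_of_ereal (path_len p) < d_r X x y + e"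
      using exists_rect_path_shorter[OF assms(2-4) e] by blast
    show ?thesis using chain_reaches_mono[OF chain_reaches_of_rect_path[OF p(1) e]] p(2) by simp
  qed
  moreover have "0 \<le> d_r X x y" using dist_le_d_r[OF assms(2-4)] zero_le_dist order_trans by blast
  ultimately show ?thesis using lipschitz_path_of_chains[OF assms(1) closed_singleton] that by blast
qed

lemma hdist_d_r_le_of_paths:
  fixes A B :: "'a::metric_space set"
  assumes "rect_path_connected X" "A \<subseteq> X" "B \<subseteq> X"
    and to_B: "\<forall>a\<in>A. \<exists>g :: real \<Rightarrow> 'a. g 0 = a \<and> g 1 \<in> B \<and> g ` {0..1} \<subseteq> X \<and>
      G-lipschitz_on {0..1} g"
    and to_A: "\<forall>b\<in>B. \<exists>g :: real \<Rightarrow> 'a. g 0 = b \<and> g 1 \<in> A \<and> g ` {0..1} \<subseteq> X \<and>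
      G-lipschitz_on {0..1} g"
  shows "hdist (d_r X) A B \<le> ereal G"
proof (rule hdist_le)
  fix a b assume "a \<in> A" "b \<in> B"
  then have "dist a b \<le> d_r X a b" using dist_le_d_r[OF assms(1)] assms(2,3) by blast
  then show "0 \<le> d_r X a b" by (rule order_trans[OF zero_le_dist])
next
  fix a assume "a \<in> A"
  then obtain g :: "real \<Rightarrow> 'a" where
    g: "g 0 = a" "g 1 \<in> B" "g ` {0..1} \<subseteq> X" "G-lipschitz_on {0..1} g"
    using to_B by blast
  then show "\<exists>b\<in>B. d_r X a b \<le> G" using d_r_le_lipschitz[OF g(4,3)] by blast
next
  fix b assume "b \<in> B"
  then obtain g :: "real \<Rightarrow> 'a" where
    g: "g 0 = b" "g 1 \<in> A" "g ` {0..1} \<subseteq> X" "G-lipschitz_on {0..1} g"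
    using to_A by blast
  then show "\<exists>a\<in>A. d_r X a b \<le> G" using d_r_le_lipschitz_reverse[OF g(4,3)] by blast
qed

lemma hdist_d_r_images_lt:
  fixes q :: "real \<Rightarrow> 'a::metric_space"
  assumes "compact X" "rect_path_connected X" "setvalued_pointwise_contraction X F"
    "maps_into_KX X F" and q: "L-lipschitz_on {0..1} q" "q ` {0..1} \<subseteq> X" and "0 < L"
  shows "hdist (d_r X) (F (q 0)) (F (q 1)) < ereal L"
proof -
  obtain G\<^sub>1 where "G\<^sub>1 < L" and to_end: "\<forall>a\<in>F (q 0). \<exists>g :: real \<Rightarrow> 'a. g 0 = a \<and>
      g 1 \<in> F (q 1) \<and> g ` {0..1} \<subseteq> X \<and> G\<^sub>1-lipschitz_on {0..1} g"
    using shorter_lipschitz_paths_between_images[OF assms(1,3,4) q \<open>0 < L\<close>] by blast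
  have "(\<lambda>t. q (1 - t)) ` {0..1} \<subseteq> X" using q(2) by auto
  from shorter_lipschitz_paths_between_images[OF assms(1,3,4) lipschitz_on_reverse[OF q(1)] this \<open>0 < L\<close>]
  obtain G\<^sub>2 where "G\<^sub>2 < L" and to_start: "\<forall>b\<in>F (q 1). \<exists>g :: real \<Rightarrow> 'a. g 0 = b \<and>
      g 1 \<in> F (q 0) \<and> g ` {0..1} \<subseteq> X \<and> G\<^sub>2-lipschitz_on {0..1} g"
    unfolding diff_zero cancel_comm_monoid_add_class.diff_cancel by blast
  have FX: "F (q 0) \<subseteq> X" "F (q 1) \<subseteq> X"
    using assms(4) q(2) unfolding maps_into_KX_def by (auto simp: image_subset_iff)
  have "\<forall>a\<in>F (q 0). \<exists>g :: real \<Rightarrow> 'a. g 0 = a \<and> g 1 \<in> F (q 1) \<and> g ` {0..1} \<subseteq> X \<and>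
      (max G\<^sub>1 G\<^sub>2)-lipschitz_on {0..1} g"
    using to_end lipschitz_on_le[OF _ max.cobounded1] by blast
  moreover have "\<forall>b\<in>F (q 1). \<exists>g :: real \<Rightarrow> 'a. g 0 = b \<and> g 1 \<in> F (q 0) \<and> g ` {0..1} \<subseteq> X \<and>
      (max G\<^sub>1 G\<^sub>2)-lipschitz_on {0..1} g"
    using to_start lipschitz_on_le[OF _ max.cobounded2] by blast
  ultimately have "hdist (d_r X) (F (q 0)) (F (q 1)) \<le> ereal (max G\<^sub>1 G\<^sub>2)"
    by (rule hdist_d_r_le_of_paths[OF assms(2) FX])
  also have "\<dots> < ereal L" using \<open>G\<^sub>1 < L\<close> \<open>G\<^sub>2 < L\<close> by simp
  finally show ?thesis .
qed

theorem lemma19: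
  fixes X :: "'a::metric_space set" and F :: "'a \<Rightarrow> 'a set"
  assumes "X \<noteq> {}" and "compact X" and "rect_path_connected X"
    and "maps_into_KX X F"
    and "setvalued_pointwise_contraction X F"
  shows "\<forall>x\<in>X. \<forall>y\<in>X. x \<noteq> y \<longrightarrow> hdist (d_r X) (F x) (F y) < ereal (d_r X x y)"
proof (intro ballI impI)
  fix x y assume x: "x \<in> X" and y: "y \<in> X" and "x \<noteq> y"
  have "0 < d_r X x y"
    using dist_le_d_r[OF assms(3) x y] \<open>x \<noteq> y\<close> by (meson less_le_trans zero_less_dist_iff)
  moreover obtain q :: "real \<Rightarrow> 'a" where "q 0 = x" "q 1 = y" "q ` {0..1} \<subseteq> X"
    "(d_r X x y)-lipschitz_on {0..1} q"
    using exists_lipschitz_geodesic[OF assms(2,3) x y] by blast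
  ultimately show "hdist (d_r X) (F x) (F y) < ereal (d_r X x y)"
    using hdist_d_r_images_lt[OF assms(2,3,5,4)] by metis
qed

end
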